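(* Let $\mathfrak s=\mathfrak{sl}(2,\mathbb C)$ with $h,e$ and Cartan involution $\theta$ such that $[e,-\theta e]=h$, $\theta h=-h$. Put $y=e-\theta e$, $t=i(e+\theta e)$, $Z=h+iy$, $\overline Z=h-iy$, $\mathfrak a=\mathbb Ch$, $\mathfrak k=\mathbb Ct$, $\mathfrak n=\mathbb Ce$, and let $Q:U(\mathfrak s)=U(\mathfrak a)U(\mathfrak k)\oplus\mathfrak nU(\mathfrak s)\to U(\mathfrak a)U(\mathfrak k)$ be the projection onto the first summand, where $U(\mathfrak a)U(\mathfrak k)$ is identified with the polynomial algebra $\mathbb C[h,t]$ via $h^at^b\mapsto h^at^b$. Then for every integer $l\ge1$ (powers taken in $U(\mathfrak s)$) $$Q(Z^l)=\prod_{j=0}^{l-1}(h+2j-t),\qquad Q(\overline Z^{\,l})=\prod_{j=0}^{l-1}(h+2j+t).$$ *)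

theory Defs
  imports Complex_Main "HOL-Library.Poly_Mapping" "HOL-Computational_Algebra.Polynomial"
begin

datatype gen = GH | GE | GF

text \<open>Words in the generators, forming a monoid under concatenation (written +).\<close>
datatype fword = FW "gen list"

instantiation fword :: monoid_add
begin
definition zero_fword :: fword where "zero_fword = FW []"
fun plus_fword :: "fword \<Rightarrow> fword \<Rightarrow> fword" where
  "plus_fword (FW a) (FW b) = FW (a @ b)"
instance
proof
  fix a b c :: fword
  show "a + b + c = a + (b + c)" by (cases a; cases b; cases c) simp
  show "0 + a = a" by (cases a) (simp add: zero_fword_def)
  show "a + 0 = a" by (cases a) (simp add: zero_fword_def)
qed
end

text \<open>The free associative complex algebra on h, e, f (finitely supported
  coefficient functions on words, with convolution product).\<close>
type_synonym FA = "fword \<Rightarrow>\<^sub>0 complex"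

definition sc :: "complex \<Rightarrow> FA" where "sc c = Poly_Mapping.single 0 c"
definition gen :: "gen \<Rightarrow> FA" where "gen g = Poly_Mapping.single (FW [g]) 1"

fun brk :: "gen \<Rightarrow> gen \<Rightarrow> FA" where
  "brk GH GE = 2 * gen GE"
| "brk GE GH = - (2 * gen GE)"
| "brk GH GF = - (2 * gen GF)"
| "brk GF GH = 2 * gen GF"
| "brk GE GF = gen GH"
| "brk GF GE = - gen GH"
| "brk _ _ = 0"

text \<open>Two-sided ideal generated by x y - y x - [x,y]; U(s) = FA / rel_ideal.\<close>
inductive_set rel_ideal :: "FA set" where
  rel: "gen x * gen y - gen y * gen x - brk x y \<in> rel_ideal"
| zero: "0 \<in> rel_ideal"
| add: "a \<in> rel_ideal \<Longrightarrow> b \<in> rel_ideal \<Longrightarrow> a + b \<in> rel_ideal"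
| mult: "a \<in> rel_ideal \<Longrightarrow> u * a * v \<in> rel_ideal"

text \<open>Cartan involution theta X = -X^T on the basis: theta h = -h, theta e = -f,
  theta f = -e.  Then [e, -theta e] = [e,f] = h.\<close>
fun theta :: "gen \<Rightarrow> FA" where
  "theta GH = - gen GH"
| "theta GE = - gen GF"
| "theta GF = - gen GE"

definition hh :: FA where "hh = gen GH"
definition ee :: FA where "ee = gen GE"
definition yy :: FA where "yy = ee - theta GE"
definition tt :: FA where "tt = sc \<i> * (ee + theta GE)"
definition ZZ :: FA where "ZZ = hh + sc \<i> * yy"
definition Zbar :: FA where "Zbar = hh - sc \<i> * yy"

text \<open>Preimage in FA of n U(s) = e U(s).\<close>
definition nU :: "FA set" where "nU = {ee * u + r | u r. r \<in> rel_ideal}"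

text \<open>C[h,t] represented as (C[h])[t]: outer variable t, inner variable h.
  ord sends h^a t^b to the ordered product h^a t^b in U(s).\<close>
definition ord_map :: "complex poly poly \<Rightarrow> FA" where
  "ord_map p = (\<Sum>b\<le>degree p. \<Sum>a\<le>degree (coeff p b).
      sc (coeff (coeff p b) a) * hh ^ a * tt ^ b)"

text \<open>Projection Q onto U(a)U(k) along n U(s), identified with C[h,t]
  (well defined on U(s) since rel_ideal \<subseteq> nU).\<close>
definition Q :: "FA \<Rightarrow> complex poly poly" where
  "Q z = (THE p. z - ord_map p \<in> nU)"

end

theory Submission
  imports Defs
begin

text \<open>
  For a complex sign s with s^2 = 1 let Z_s = h + s i y, so
  Z = Z_1 and Zbar = Z_(-1).  In U(s) one has Z_s = h - s t + 2 s i e and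
  t Z_s = Z_s (t - 2s).  Hence, for an ordered polynomial P(h,t) (every h to
  the left of every t), P(h,t) Z_s is congruent to (h - s t) P(h, t - 2s)
  modulo n U(s), because h^a e = e (h + 2)^a lies in n U(s).  Induction on l
  gives that Z_s^l is congruent to the product of (h + 2j - s t), j < l.

  To conclude that Q(Z_s^l) equals this product we need the sum
  U(a)U(k) + n U(s) to be direct.  This is shown with an explicit right
  U(s)-module C[c][X] on which h, e, f act by c + 2X d/dX, c d/dX + X d^2/dX^2
  and -X: the vector 1 is killed by e and hence by n U(s), while
  1 . h^a t^b = c^a T_b with T_b of exact degree b in X, so distinct ordered
  polynomials act differently on 1.
\<close>

lemma poly_mapping_single_induct [case_names zero add]:
  fixes x :: "'a \<Rightarrow>\<^sub>0 'b::comm_monoid_add"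
  assumes "P 0" and "\<And>k c f. P f \<Longrightarrow> P (Poly_Mapping.single k c + f)"
  shows "P x"
proof (induction x rule: update_induct)
  case const
  then show ?case using assms(1) .
next
  case (update f a b)
  have "Poly_Mapping.update a b f = Poly_Mapping.single a b + f"
    using update(1)
    by (intro poly_mapping_eqI)
       (auto simp: lookup_update lookup_add lookup_single when_def in_keys_iff)
  then show ?case using assms(2)[OF update(3)] by simp
qed

lemma sc_add: "sc (a + b) = sc a + sc b"
  by (simp add: sc_def single_add)

lemma sc_mult: "sc (a * b) = sc a * sc b"
  by (simp add: sc_def mult_single)

lemma sc_1 [simp]: "sc 1 = 1"
  by (simp add: sc_def)

lemma sc_0 [simp]: "sc 0 = 0"
  by (simp add: sc_def)

lemma sc_minus: "sc (- a) = - sc a"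
  by (simp add: sc_def single_uminus)

lemma sc_central: "sc c * x = x * sc c"
proof (induction x rule: poly_mapping_single_induct)
  case zero
  then show ?case by simp
next
  case (add k d f)
  have "sc c * Poly_Mapping.single k d = Poly_Mapping.single k d * sc c"
    by (simp add: sc_def mult_single mult.commute)
  then show ?case using add by (simp add: distrib_left distrib_right)
qed

subsection \<open>A right module in which n U(s) kills the vector 1\<close>

text \<open>This realises U(s)/e U(s) concretely enough to separate ordered
  polynomials.  The module is C[c][X], realised as polynomials in X whose coefficients
  are polynomials in c.\<close>
type_synonym module = "complex poly poly"

definition var_c :: module where "var_c = [:[:0, 1:]:]"
definition var_X :: module where "var_X = [:0, 1:]"

fun gen_act :: "gen \<Rightarrow> module \<Rightarrow> module" where
  "gen_act GH p = var_c * p + 2 * var_X * pderiv p"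
| "gen_act GE p = var_c * pderiv p + var_X * pderiv (pderiv p)"
| "gen_act GF p = - (var_X * p)"

text \<open>Action of a word (letters act from left to right: a right action).\<close>
fun word_act :: "fword \<Rightarrow> module \<Rightarrow> module" where
  "word_act (FW l) m = foldl (\<lambda>m g. gen_act g m) m l"

definition act :: "FA \<Rightarrow> module \<Rightarrow> module" where
  "act a m = (\<Sum>k\<in>Poly_Mapping.keys a. smult [:Poly_Mapping.lookup a k:] (word_act k m))"

lemma gen_act_add: "gen_act g (p + q) = gen_act g p + gen_act g q"
  by (cases g) (simp_all add: pderiv_add algebra_simps)

lemma gen_act_smult: "gen_act g (smult r p) = smult r (gen_act g p)"
  by (cases g) (simp_all add: pderiv_smult algebra_simps smult_add_right)

lemma word_act_add: "word_act w (p + q) = word_act w p + word_act w q"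
proof -
  have "foldl (\<lambda>m g. gen_act g m) (p + q) l =
        foldl (\<lambda>m g. gen_act g m) p l + foldl (\<lambda>m g. gen_act g m) q l" for l
    by (induction l arbitrary: p q) (simp_all add: gen_act_add)
  then show ?thesis by (cases w) simp
qed

lemma word_act_smult: "word_act w (smult r p) = smult r (word_act w p)"
proof -
  have "foldl (\<lambda>m g. gen_act g m) (smult r p) l = smult r (foldl (\<lambda>m g. gen_act g m) p l)" for l
    by (induction l arbitrary: p) (simp_all add: gen_act_smult)
  then show ?thesis by (cases w) simp
qed

lemma word_act_plus: "word_act (v + w) m = word_act w (word_act v m)"
  by (cases v; cases w) simp

lemma word_act_zero: "word_act 0 m = m"
  by (simp add: zero_fword_def)

lemma smult_sum_right: "smult r (sum f S) = (\<Sum>i\<in>S. smult r (f i))"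
  by (induct S rule: infinite_finite_induct) (auto simp: smult_add_right)

lemma act_superset:
  "finite K \<Longrightarrow> Poly_Mapping.keys a \<subseteq> K \<Longrightarrow>
   act a m = (\<Sum>k\<in>K. smult [:Poly_Mapping.lookup a k:] (word_act k m))"
  unfolding act_def by (rule sum.mono_neutral_left) (auto simp: in_keys_iff)

lemma act_add: "act (a + b) m = act a m + act b m"
proof -
  let ?K = "Poly_Mapping.keys a \<union> Poly_Mapping.keys b"
  have "[:x + y:] = [:x:] + [:y:]" for x y :: complex by simp
  then have "smult [:x + y:] p = smult [:x:] p + smult [:y:] p" for x y and p :: module
    by (simp only: smult_add_left)
  moreover have "Poly_Mapping.keys (a + b) \<subseteq> ?K" by (rule keys_add)
  ultimately show ?thesis
    by (simp add: act_superset[of ?K] lookup_add sum.distrib)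
qed

lemma act_zero [simp]: "act 0 m = 0"
  by (simp add: act_def)

lemma smult_const_one [simp]: "smult [:1:] (p :: module) = p"
  by (subst pCons_one) simp

lemma act_single: "act (Poly_Mapping.single k c) m = smult [:c:] (word_act k m)"
  by (cases "c = 0") (simp_all add: act_def)

lemma act_module_add: "act a (p + q) = act a p + act a q"
  by (simp add: act_def word_act_add sum.distrib smult_add_right)

lemma act_module_smult: "act a (smult r p) = smult r (act a p)"
  unfolding act_def word_act_smult smult_sum_right
  by (rule sum.cong) (simp_all add: mult.commute)

lemma act_module_0: "act a 0 = 0"
  using act_module_smult[of a 0 0] by simp

lemma act_mult: "act (a * b) m = act b (act a m)"
proof (induction a arbitrary: m rule: poly_mapping_single_induct)
  case zero
  then show ?case by (simp add: act_module_0)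
next
  case (add k c f)
  have "act (Poly_Mapping.single k c * b) m = act b (act (Poly_Mapping.single k c) m)" for m
  proof (induction b arbitrary: m rule: poly_mapping_single_induct)
    case zero
    then show ?case by simp
  next
    case (add l d g)
    then show ?case
      by (simp add: distrib_left act_add mult_single act_single word_act_plus word_act_smult
          mult.commute)
  qed
  then show ?case using add by (simp add: distrib_right act_add act_module_add)
qed

lemma act_neg: "act (- a) m = - act a m"
  using act_add[of a "- a" m] by (simp add: add_eq_0_iff)

lemma act_diff: "act (a - b) m = act a m - act b m"
  using act_add[of a "- b" m] by (simp add: act_neg)

lemma act_gen: "act (gen g) = gen_act g"
  by (rule ext) (simp add: gen_def act_single)

lemma act_sc: "act (sc c) m = smult [:c:] m"
  by (simp add: sc_def act_single word_act_zero)

lemma act_one: "act 1 m = m"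
  using act_sc[of 1 m] by simp

lemma act_power: "act (x ^ n) m = (act x ^^ n) m"
  by (induction n arbitrary: m) (simp_all add: act_one act_mult funpow_Suc_right del: funpow.simps)

lemma act_sum: "act (sum f S) m = (\<Sum>i\<in>S. act (f i) m)"
  by (induct S rule: infinite_finite_induct) (simp_all add: act_add)

lemma pderiv_var_c [simp]: "pderiv var_c = 0"
  by (simp add: var_c_def pderiv_pCons)

lemma pderiv_var_X [simp]: "pderiv var_X = 1"
  by (simp add: var_X_def pderiv_pCons)

lemma act_relation: "act (gen x * gen y - gen y * gen x - brk x y) m = 0"
proof -
  have act_two: "act 2 p = smult [:2:] p" for p
    using act_sc[of 2 p] by (simp add: sc_def)
  have smult_two: "smult [:2:] p = 2 * p" for p :: module
    by (simp add: numeral_poly)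
  show ?thesis
    by (cases x; cases y; simp only: brk.simps act_diff act_mult act_gen act_neg act_two
        gen_act_smult smult_two act_zero;
        simp add: pderiv_mult pderiv_add pderiv_minus pderiv_diff algebra_simps)
qed

lemma act_rel_ideal: "r \<in> rel_ideal \<Longrightarrow> act r m = 0"
proof (induction r arbitrary: m rule: rel_ideal.induct)
  case (rel x y)
  then show ?case by (rule act_relation)
next
  case zero
  then show ?case by simp
next
  case (add a b)
  then show ?case by (simp add: act_add)
next
  case (mult a u v)
  then show ?case by (simp add: act_mult act_module_0)
qed

text \<open>The vector 1 is annihilated by e, hence by the whole of n U(s).\<close>
lemma act_nU: "z \<in> nU \<Longrightarrow> act z 1 = 0"
  unfolding nU_def ee_def
  by (auto simp: act_add act_mult act_gen act_rel_ideal act_module_0)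

lemma rel_ideal_neg: "a \<in> rel_ideal \<Longrightarrow> - a \<in> rel_ideal"
  using rel_ideal.mult[of a "- 1" 1] by simp

lemma rel_ideal_diff: "a \<in> rel_ideal \<Longrightarrow> b \<in> rel_ideal \<Longrightarrow> a - b \<in> rel_ideal"
  using rel_ideal.add[OF _ rel_ideal_neg, of a b] by simp

lemma rel_ideal_lmult: "a \<in> rel_ideal \<Longrightarrow> u * a \<in> rel_ideal"
  using rel_ideal.mult[of a u 1] by simp

lemma rel_ideal_rmult: "a \<in> rel_ideal \<Longrightarrow> a * v \<in> rel_ideal"
  using rel_ideal.mult[of a 1 v] by simp

lemma nU_I: "r \<in> rel_ideal \<Longrightarrow> ee * u + r \<in> nU"
  unfolding nU_def by blast

lemma nU_E: "a \<in> nU \<Longrightarrow> (\<And>u r. a = ee * u + r \<Longrightarrow> r \<in> rel_ideal \<Longrightarrow> P) \<Longrightarrow> P"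
  unfolding nU_def by blast

lemma nU_rel: "r \<in> rel_ideal \<Longrightarrow> r \<in> nU"
  using nU_I[of r 0] by simp

lemma nU_ee: "ee * u \<in> nU"
  using nU_I[OF rel_ideal.zero, of u] by simp

lemma nU_add: "a \<in> nU \<Longrightarrow> b \<in> nU \<Longrightarrow> a + b \<in> nU"
proof -
  assume "a \<in> nU" "b \<in> nU"
  then obtain u r u' r' where "a = ee * u + r" "r \<in> rel_ideal" "b = ee * u' + r'" "r' \<in> rel_ideal"
    by (metis nU_E)
  then have "a + b = ee * (u + u') + (r + r')" by (simp add: algebra_simps)
  then show ?thesis using nU_I[OF rel_ideal.add] \<open>r \<in> rel_ideal\<close> \<open>r' \<in> rel_ideal\<close> by simp
qed

lemma nU_sum: "(\<And>i. i \<in> S \<Longrightarrow> f i \<in> nU) \<Longrightarrow> sum f S \<in> nU"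
  by (induct S rule: infinite_finite_induct) (auto intro: nU_add nU_rel rel_ideal.zero)

lemma nU_rmult: "a \<in> nU \<Longrightarrow> a * v \<in> nU"
proof -
  assume "a \<in> nU"
  then obtain u r where "a = ee * u + r" "r \<in> rel_ideal" by (metis nU_E)
  then have "a * v = ee * (u * v) + r * v" by (simp add: algebra_simps)
  then show ?thesis using nU_I[OF rel_ideal_rmult[OF \<open>r \<in> rel_ideal\<close>]] by simp
qed

lemma nU_sc: "a \<in> nU \<Longrightarrow> sc c * a \<in> nU"
proof -
  assume "a \<in> nU"
  then obtain u r where a: "a = ee * u + r" "r \<in> rel_ideal" by (metis nU_E)
  have "sc c * (ee * u) = ee * (sc c * u)"
    by (simp only: mult.assoc[symmetric] sc_central[of c ee])
  then have "sc c * a = ee * (sc c * u) + sc c * r"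
    by (simp add: a distrib_left)
  then show ?thesis using nU_I[OF rel_ideal_lmult[OF a(2)]] by simp
qed

text \<open>Since h^(a+1) e = h^a e (h + 2) modulo the relations, every h^a e lies
  in n U(s); this is what lets e be dropped behind a polynomial in h.\<close>
lemma hh_power_ee: "hh ^ a * ee \<in> nU"
proof (induction a)
  case 0
  then show ?case using nU_ee[of 1] by simp
next
  case (Suc a)
  have r: "hh * ee - ee * hh - 2 * ee \<in> rel_ideal"
    using rel_ideal.rel[of GH GE] by (simp add: hh_def ee_def)
  have "hh ^ a * (hh * ee) = hh ^ a * ee * (hh + 2) + hh ^ a * (hh * ee - ee * hh - 2 * ee)"
    by (simp add: distrib_left distrib_right mult_2 mult_2_right mult.assoc right_diff_distrib)
  then have "hh ^ Suc a * ee = hh ^ a * ee * (hh + 2) + hh ^ a * (hh * ee - ee * hh - 2 * ee)"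
    by (simp only: power_Suc2 mult.assoc)
  then show ?case using nU_add[OF nU_rmult[OF Suc] nU_rel[OF rel_ideal_lmult[OF r]]] by simp
qed

definition hpoly :: "complex poly \<Rightarrow> FA" where
  "hpoly q = (\<Sum>a\<le>degree q. sc (coeff q a) * hh ^ a)"

lemma hpoly_bound: "degree q \<le> N \<Longrightarrow> hpoly q = (\<Sum>a\<le>N. sc (coeff q a) * hh ^ a)"
  unfolding hpoly_def by (rule sum.mono_neutral_left) (auto simp: coeff_eq_0)

lemma hpoly_add: "hpoly (q + r) = hpoly q + hpoly r"
proof -
  define N where "N = max (degree q) (degree r)"
  have "degree (q + r) \<le> N" unfolding N_def by (rule degree_add_le_max)
  then show ?thesis
    by (simp add: hpoly_bound[of _ N] N_def sc_add distrib_right sum.distrib)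
qed

lemma hpoly_smult: "hpoly (smult c q) = sc c * hpoly q"
  by (simp add: hpoly_bound[of "smult c q" "degree q"] hpoly_def sum_distrib_left sc_mult mult.assoc)

lemma hpoly_0 [simp]: "hpoly 0 = 0"
  by (simp add: hpoly_def)

lemma hpoly_neg: "hpoly (- q) = - hpoly q"
  using hpoly_add[of q "- q"] by (simp add: add_eq_0_iff)

lemma hpoly_1: "hpoly 1 = 1"
  by (simp add: hpoly_def)

lemma hpoly_times_h: "hpoly (pCons 0 q) = hpoly q * hh"
proof -
  have "hpoly (pCons 0 q) = (\<Sum>a\<le>Suc (degree q). sc (coeff (pCons 0 q) a) * hh ^ a)"
    by (rule hpoly_bound) (simp add: degree_pCons_le)
  also have "\<dots> = hpoly q * hh"
    by (simp add: hpoly_def sum.atMost_Suc_shift sum_distrib_right power_Suc2 mult.assoc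
        power_commutes del: sum.atMost_Suc)
  finally show ?thesis .
qed

lemma hpoly_ee: "hpoly q * ee \<in> nU"
  unfolding hpoly_def sum_distrib_right
  by (rule nU_sum) (simp add: mult.assoc nU_sc hh_power_ee)

lemma ord_map_hpoly: "ord_map p = (\<Sum>b\<le>degree p. hpoly (coeff p b) * tt ^ b)"
  unfolding ord_map_def hpoly_def sum_distrib_right ..

lemma ord_map_bound: "degree p \<le> N \<Longrightarrow> ord_map p = (\<Sum>b\<le>N. hpoly (coeff p b) * tt ^ b)"
  unfolding ord_map_hpoly by (rule sum.mono_neutral_left) (auto simp: coeff_eq_0)

lemma ord_map_0 [simp]: "ord_map 0 = 0"
  by (simp add: ord_map_hpoly)

lemma ord_map_add: "ord_map (p + q) = ord_map p + ord_map q"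
proof -
  define N where "N = max (degree p) (degree q)"
  have "degree (p + q) \<le> N" unfolding N_def by (rule degree_add_le_max)
  then show ?thesis
    by (simp add: ord_map_bound[of _ N] N_def hpoly_add distrib_right sum.distrib)
qed

lemma ord_map_smult: "ord_map (smult [:c:] p) = sc c * ord_map p"
proof -
  have "coeff (smult [:c:] p) b = smult c (coeff p b)" for b by simp
  then show ?thesis
    by (simp add: ord_map_bound[of "smult [:c:] p" "degree p"] ord_map_hpoly sum_distrib_left
        hpoly_smult mult.assoc del: coeff_smult)
qed

lemma ord_map_pCons: "ord_map (pCons q p) = hpoly q + ord_map p * tt"
proof -
  have "ord_map (pCons q p) = (\<Sum>b\<le>Suc (degree p). hpoly (coeff (pCons q p) b) * tt ^ b)"
    by (rule ord_map_bound) (simp add: degree_pCons_le)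
  also have "\<dots> = hpoly q + ord_map p * tt"
    by (simp add: ord_map_hpoly sum.atMost_Suc_shift sum_distrib_right power_Suc2 mult.assoc
        power_commutes del: sum.atMost_Suc)
  finally show ?thesis .
qed

lemma ord_map_1: "ord_map 1 = 1"
  using ord_map_pCons[of 1 0] by (simp add: hpoly_1 pCons_one)

subsection \<open>Ordered polynomials are determined modulo n U(s)\<close>

lemma triangular_family_independent:
  fixes T :: "nat \<Rightarrow> 'a::idom poly"
  assumes deg: "\<And>b. degree (T b) \<le> b" and diag: "\<And>b. coeff (T b) b \<noteq> 0"
  shows "(\<Sum>b\<le>N. smult (c b) (T b)) = 0 \<Longrightarrow> \<forall>b\<le>N. c b = 0"
proof (induction N)
  case 0
  moreover have "T 0 \<noteq> 0" using diag[of 0] by auto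
  ultimately show ?case by simp
next
  case (Suc N)
  have "coeff (T b) (Suc N) = 0" if "b \<le> N" for b
    using deg[of b] that by (intro coeff_eq_0) simp
  then have "coeff (\<Sum>b\<le>N. smult (c b) (T b)) (Suc N) = 0"
    by (simp add: coeff_sum)
  moreover have "coeff (\<Sum>b\<le>Suc N. smult (c b) (T b)) (Suc N) = 0"
    using Suc.prems by simp
  ultimately have "c (Suc N) * coeff (T (Suc N)) (Suc N) = 0"
    by simp
  then have top: "c (Suc N) = 0" using diag[of "Suc N"] by simp
  then have "(\<Sum>b\<le>N. smult (c b) (T b)) = 0" using Suc.prems by simp
  then show ?case using Suc.IH top by (auto simp: le_Suc_eq)
qed

definition t_orbit :: "nat \<Rightarrow> module" where "t_orbit b = (act tt ^^ b) 1"

lemma act_tt: "act tt m = smult [:\<i>:] (gen_act GE m - gen_act GF m)"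
  by (simp add: tt_def ee_def act_mult act_sc act_diff act_gen act_neg gen_act_smult
      smult_diff_right del: gen_act.simps)

lemma coeff_act_tt:
  "coeff (act tt m) (Suc k) =
     [:\<i>:] * ([:0, 1:] * (of_nat (Suc (Suc k)) * coeff m (Suc (Suc k)))
     + of_nat (Suc k) * (of_nat (Suc (Suc k)) * coeff m (Suc (Suc k))) + coeff m k)"
  by (simp add: act_tt var_c_def var_X_def coeff_pderiv)

lemma t_orbit_degree: "degree (t_orbit b) \<le> b \<and> coeff (t_orbit b) b = [:\<i> ^ b:]"
proof (induction b)
  case 0
  then show ?case by (simp add: t_orbit_def)
next
  case (Suc b)
  have step: "t_orbit (Suc b) = act tt (t_orbit b)" by (simp add: t_orbit_def)
  have "coeff (t_orbit (Suc b)) n = 0" if "n > Suc b" for n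
  proof -
    obtain k where "n = Suc k" "k > b" using \<open>n > Suc b\<close> by (cases n) auto
    then show ?thesis using Suc by (simp add: step coeff_act_tt coeff_eq_0)
  qed
  then have "degree (t_orbit (Suc b)) \<le> Suc b" by (simp add: degree_le)
  moreover have "coeff (t_orbit (Suc b)) (Suc b) = [:\<i> ^ Suc b:]"
    using Suc by (simp add: step coeff_act_tt coeff_eq_0)
  ultimately show ?case ..
qed

lemma act_ord_map: "act (ord_map p) 1 = (\<Sum>b\<le>degree p. smult (coeff p b) (t_orbit b))"
proof -
  have h_power: "(gen_act GH ^^ a) [:q:] = [:[:0, 1:] ^ a * q:]" for a q
    by (induction a) (simp_all add: var_c_def pderiv_pCons)
  have act_tt_power: "(act tt ^^ b) (smult r m) = smult r ((act tt ^^ b) m)" for b r m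
    by (induction b) (simp_all add: act_module_smult)
  have monomial:
    "act (sc c * hh ^ a * tt ^ b) 1 = smult ([:0, 1:] ^ a * [:c:]) (t_orbit b)" for c a b
  proof -
    have "act (sc c * hh ^ a * tt ^ b) 1 = (act tt ^^ b) ((gen_act GH ^^ a) [:[:c:]:])"
      by (simp add: act_mult act_power act_sc hh_def act_gen del: funpow.simps gen_act.simps)
    also have "\<dots> = (act tt ^^ b) (smult ([:0, 1:] ^ a * [:c:]) 1)"
      by (simp add: h_power del: funpow.simps)
    also have "\<dots> = smult ([:0, 1:] ^ a * [:c:]) (t_orbit b)"
      by (simp only: act_tt_power t_orbit_def)
    finally show ?thesis .
  qed
  have "act (ord_map p) 1 =
        (\<Sum>b\<le>degree p. \<Sum>a\<le>degree (coeff p b). smult (monom (coeff (coeff p b) a) a) (t_orbit b))"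
    by (simp add: ord_map_def act_sum monomial monom_altdef mult.commute[of "[:0, 1:] ^ _"])
  also have "\<dots> = (\<Sum>b\<le>degree p. smult (coeff p b) (t_orbit b))"
    by (simp add: smult_sum[symmetric] poly_as_sum_of_monoms)
  finally show ?thesis .
qed

lemma act_ord_map_bound:
  "degree p \<le> N \<Longrightarrow> act (ord_map p) 1 = (\<Sum>b\<le>N. smult (coeff p b) (t_orbit b))"
  unfolding act_ord_map by (rule sum.mono_neutral_left) (auto simp: coeff_eq_0)

lemma ord_map_act_inj:
  assumes eq: "act (ord_map p) 1 = act (ord_map q) 1"
  shows "p = q"
proof -
  define N where "N = max (degree p) (degree q)"
  have deg: "degree (t_orbit b) \<le> b" and diag: "coeff (t_orbit b) b \<noteq> 0" for b
    using t_orbit_degree[of b] by simp_all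
  have "(\<Sum>b\<le>N. smult (coeff p b - coeff q b) (t_orbit b)) =
        act (ord_map p) 1 - act (ord_map q) 1"
  proof -
    have "degree p \<le> N" "degree q \<le> N" by (simp_all add: N_def)
    then show ?thesis
      unfolding smult_diff_left sum_subtractf by (simp only: act_ord_map_bound)
  qed
  then have "(\<Sum>b\<le>N. smult (coeff p b - coeff q b) (t_orbit b)) = 0"
    using eq by simp
  from triangular_family_independent[OF deg diag this]
  have "\<forall>b\<le>N. coeff p b = coeff q b"
    by simp
  then have "coeff p n = coeff q n" for n
    by (cases "n \<le> N") (auto simp: N_def coeff_eq_0)
  then show "p = q" by (rule poly_eqI)
qed

lemma Q_eqI:
  assumes p: "z - ord_map p \<in> nU"
  shows "Q z = p"
proof -
  have same_action: "act z 1 = act (ord_map q) 1" if "z - ord_map q \<in> nU" for q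
    using act_nU[OF that] unfolding act_diff by (rule right_minus_eq[THEN iffD1])
  show ?thesis
    unfolding Q_def
  proof (rule the_equality)
    show "z - ord_map p \<in> nU" by (rule p)
    show "q = p" if "z - ord_map q \<in> nU" for q
      using same_action[OF that] same_action[OF p] by (metis ord_map_act_inj)
  qed
qed

definition Zs :: "complex \<Rightarrow> FA" where "Zs \<sigma> = hh + sc (\<sigma> * \<i>) * yy"

lemma ZZ_eq_Zs: "ZZ = Zs 1"
  by (simp add: ZZ_def Zs_def)

lemma Zbar_eq_Zs: "Zbar = Zs (- 1)"
  by (simp add: Zbar_def Zs_def sc_minus)

definition rel_gen :: "gen \<Rightarrow> gen \<Rightarrow> FA" where
  "rel_gen x y = gen x * gen y - gen y * gen x - brk x y"

text \<open>In the free algebra, t Z_s - Z_s (t - 2s) is a combination of defining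
  relations plus 2 (s^2 - 1) i y; it encodes [t, h] = -2 i y and [t, i y] = -2 h.\<close>
lemma Zs_commute_t_identity:
  "tt * Zs \<sigma> - Zs \<sigma> * (tt - sc (2 * \<sigma>)) =
     sc \<i> * rel_gen GE GH - sc \<i> * rel_gen GF GH - sc (2 * \<sigma>) * rel_gen GE GF
     + sc (2 * (\<sigma>\<^sup>2 - 1) * \<i>) * yy"
proof -
  have two: "(2::FA) = Poly_Mapping.single 0 2" by simp
  show ?thesis
    unfolding rel_gen_def brk.simps Zs_def tt_def yy_def hh_def ee_def theta.simps two gen_def sc_def
    by (rule poly_mapping_eqI)
       (simp add: algebra_simps power2_eq_square mult_single lookup_add lookup_minus lookup_single
        when_def zero_fword_def)
qed

lemma Zs_commute_t:
  assumes "\<sigma>\<^sup>2 = 1"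
  shows "tt * Zs \<sigma> - Zs \<sigma> * (tt - sc (2 * \<sigma>)) \<in> rel_ideal"
proof -
  have rel: "rel_gen x y \<in> rel_ideal" for x y
    unfolding rel_gen_def by (rule rel_ideal.rel)
  have "sc \<i> * rel_gen GE GH - sc \<i> * rel_gen GF GH - sc (2 * \<sigma>) * rel_gen GE GF \<in> rel_ideal"
    by (intro rel_ideal_diff rel_ideal_lmult rel)
  then show ?thesis
    unfolding Zs_commute_t_identity using assms by simp
qed

lemma Zs_decomp: "Zs \<sigma> = hh - sc \<sigma> * tt + sc (2 * \<sigma> * \<i>) * ee"
  unfolding Zs_def tt_def yy_def hh_def ee_def theta.simps gen_def sc_def
  by (rule poly_mapping_eqI)
     (simp add: algebra_simps mult_single lookup_add lookup_minus lookup_single when_def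
      zero_fword_def)

subsection \<open>Right multiplication by Z_s on ordered polynomials\<close>

text \<open>The polynomial (h - s t) P(h, t - 2s), which represents P(h,t) Z_s
  modulo n U(s).\<close>
definition Zs_right_mult :: "complex \<Rightarrow> complex poly poly \<Rightarrow> complex poly poly" where
  "Zs_right_mult \<sigma> P = [:[:0, 1:], - [:\<sigma>:]:] * pcompose P [:[:- 2 * \<sigma>:], 1:]"

lemma ord_map_Zs_right_mult_pCons:
  "ord_map (Zs_right_mult \<sigma> (pCons q P)) =
     hpoly q * hh - sc \<sigma> * hpoly q * tt + ord_map (Zs_right_mult \<sigma> P) * tt
     + sc (- 2 * \<sigma>) * ord_map (Zs_right_mult \<sigma> P)"
proof -
  have "Zs_right_mult \<sigma> (pCons q P) =
        pCons (pCons 0 q) (pCons (smult (- \<sigma>) q) 0)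
        + (pCons 0 (Zs_right_mult \<sigma> P) + smult [:- 2 * \<sigma>:] (Zs_right_mult \<sigma> P))"
    by (simp add: Zs_right_mult_def pcompose_pCons algebra_simps)
  then show ?thesis
    by (simp add: ord_map_add ord_map_pCons ord_map_smult hpoly_times_h hpoly_smult hpoly_neg
        sc_minus mult.assoc)
qed

lemma ord_map_right_mult:
  assumes commute: "tt * W - W * (tt - sc (2 * \<sigma>)) \<in> rel_ideal"
    and decomp: "W = hh - sc \<sigma> * tt + sc \<mu> * ee"
  shows "ord_map P * W - ord_map (Zs_right_mult \<sigma> P) \<in> nU"
proof (induction P)
  case 0
  then show ?case by (simp add: Zs_right_mult_def nU_rel rel_ideal.zero)
next
  case (pCons q P)
  define Hq where "Hq = hpoly q"
  define O1 where "O1 = ord_map P"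
  define O2 where "O2 = ord_map (Zs_right_mult \<sigma> P)"
  have central: "Hq * (sc c * x) = sc c * (Hq * x)" "O2 * sc c = sc c * O2" for c x
    by (simp_all only: mult.assoc[symmetric] sc_central[of c Hq, symmetric] sc_central[of c O2])
  have "(Hq + O1 * tt) * W - (Hq * hh - sc \<sigma> * Hq * tt + O2 * tt + sc (- 2 * \<sigma>) * O2)
     = sc \<mu> * (Hq * ee) + O1 * (tt * W - W * (tt - sc (2 * \<sigma>)))
       + (O1 * W - O2) * (tt - sc (2 * \<sigma>))"
    unfolding decomp by (simp add: algebra_simps central sc_minus)
  moreover have "sc \<mu> * (Hq * ee) + O1 * (tt * W - W * (tt - sc (2 * \<sigma>)))
       + (O1 * W - O2) * (tt - sc (2 * \<sigma>)) \<in> nU"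
    unfolding Hq_def O1_def O2_def
    by (intro nU_add nU_sc hpoly_ee nU_rel rel_ideal_lmult commute nU_rmult pCons.IH)
  ultimately show ?case
    by (simp add: ord_map_Zs_right_mult_pCons ord_map_pCons Hq_def O1_def O2_def)
qed

lemma Zs_right_mult_prod:
  assumes "\<sigma>\<^sup>2 = 1"
  shows "Zs_right_mult \<sigma> (\<Prod>j<l. [:[:of_nat (2 * j), 1:], - [:\<sigma>:]:]) =
         (\<Prod>j<Suc l. [:[:of_nat (2 * j), 1:], - [:\<sigma>:]:])"
proof -
  have shift: "pcompose [:[:of_nat (2 * j), 1:], - [:\<sigma>:]:] [:[:- 2 * \<sigma>:], 1:] =
               [:[:of_nat (2 * Suc j), 1:], - [:\<sigma>:]:]" for j
    using assms by (simp add: pcompose_pCons algebra_simps power2_eq_square)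
  show ?thesis
    unfolding Zs_right_mult_def pcompose_prod shift prod.lessThan_Suc_shift
    by simp
qed

lemma Zs_power:
  assumes "\<sigma>\<^sup>2 = 1"
  shows "Zs \<sigma> ^ l - ord_map (\<Prod>j<l. [:[:of_nat (2 * j), 1:], - [:\<sigma>:]:]) \<in> nU"
proof (induction l)
  case 0
  then show ?case by (simp add: ord_map_1 nU_rel rel_ideal.zero)
next
  case (Suc l)
  let ?P = "\<Prod>j<l. [:[:of_nat (2 * j), 1:], - [:\<sigma>:]:]"
  have "Zs \<sigma> ^ Suc l - ord_map (Zs_right_mult \<sigma> ?P) =
        (Zs \<sigma> ^ l - ord_map ?P) * Zs \<sigma> + (ord_map ?P * Zs \<sigma> - ord_map (Zs_right_mult \<sigma> ?P))"
    by (simp add: power_Suc2 algebra_simps power_commutes)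
  moreover have "\<dots> \<in> nU"
    using ord_map_right_mult[OF Zs_commute_t[OF assms] Zs_decomp]
    by (intro nU_add nU_rmult Suc.IH)
  ultimately show ?case
    by (simp only: Zs_right_mult_prod[OF assms])
qed

text \<open>Q(Z^l) and Q(Zbar^l) are the products over j < l of h + 2j - t and
  h + 2j + t (the formula holds for l = 0 as well).\<close>
theorem theorem6p3:
  fixes l :: nat
  assumes "l \<ge> 1"
  shows "Q (ZZ ^ l) = (\<Prod>j<l. [: [: of_nat (2 * j), 1 :], - 1 :])
       \<and> Q (Zbar ^ l) = (\<Prod>j<l. [: [: of_nat (2 * j), 1 :], 1 :])"
proof
  show "Q (ZZ ^ l) = (\<Prod>j<l. [: [: of_nat (2 * j), 1 :], - 1 :])"
    using Q_eqI[OF Zs_power[of 1 l]] by (simp add: ZZ_eq_Zs pCons_one)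
  show "Q (Zbar ^ l) = (\<Prod>j<l. [: [: of_nat (2 * j), 1 :], 1 :])"
    using Q_eqI[OF Zs_power[of "- 1" l]] by (simp add: Zbar_eq_Zs pCons_one)
qed

end
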